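(* Let $q\ge2$, $n\ge1$, and ${\boldsymbol y}\in\Sigma_q^{n+1}$ with run length profile $(r_1,\dots,r_{\rho({\boldsymbol y})})$. Then $\mathsf{H}^{\mathsf{In}}_{1\text{-}\mathsf{Ins}}({\boldsymbol y})$ is invariant to permutations of the run length profile of ${\boldsymbol y}$ and $$\mathsf{H}^{\mathsf{In}}_{1\text{-}\mathsf{Ins}}({\boldsymbol y})=\log_2(n+1)-\frac{1}{n+1}\sum_{i=1}^{\rho({\boldsymbol y})}r_i\log_2 r_i.$$
   Context: $\Sigma_q=\{0,1,\dots,q-1\}$. For sequences ${\boldsymbol x}$ of length $\ell$ and ${\boldsymbol y}$ of length $N\ge\ell$, $\omega_{{\boldsymbol x}}({\boldsymbol y})$ is the number of index tuples $1\le i_1<\dots<i_\ell\le N$ with $y_{i_j}=x_j$. The $k$-insertion channel with input length $n$ maps ${\boldsymbol x}\in\Sigma_q^n$ to ${\boldsymbol y}\in\Sigma_q^{n+k}$ with probability $\omega_{{\boldsymbol x}}({\boldsymbol y})/(\binom{n+k}{k}q^k)$. Under uniform transmission $X$ is uniform on $\Sigma_q^n$ and $\mathsf{H}^{\mathsf{In}}_{k\text{-}\mathsf{Ins}}({\boldsymbol y})=H(X\mid Y={\boldsymbol y})$ (base-2 logarithms), with posterior $P({\boldsymbol x}\mid {\boldsymbol y})=\Pr\{{\boldsymbol y}\mid{\boldsymbol x}\}/\sum_{{\boldsymbol x}'}\Pr\{{\boldsymbol y}\mid{\boldsymbol x}'\}$. A run is a maximal block of identical consecutive symbols; $\rho({\boldsymbol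 y})$ is the number of runs and the run length profile is the vector of run lengths from left to right. Convention $0\log 0$ does not arise since $r_i\ge1$. *)

theory Defs
  imports Complex_Main "HOL-Library.Multiset"
begin

definition words :: "nat \<Rightarrow> nat \<Rightarrow> nat list set" where
  "words q n = {x. length x = n \<and> set x \<subseteq> {..<q}}"

text \<open>omega_x(y): number of index sets i_1<...<i_l (0-based here) with y_{i_j} = x_j.\<close>
definition omega :: "nat list \<Rightarrow> nat list \<Rightarrow> nat" where
  "omega x y = card {I. I \<subseteq> {..<length y} \<and> card I = length x \<and>
       (\<forall>j<length x. y ! (sorted_list_of_set I ! j) = x ! j)}"

text \<open>Transition probability of the k-insertion channel with input length n.\<close>
definition ins_prob :: "nat \<Rightarrow> nat \<Rightarrow> nat \<Rightarrow> nat list \<Rightarrow> nat list \<Rightarrow> real" where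
  "ins_prob q n k x y = real (omega x y) / (real ((n + k) choose k) * real q ^ k)"

text \<open>Posterior P(x | y) under uniform input on \<Sigma>_q^n.\<close>
definition posterior :: "nat \<Rightarrow> nat \<Rightarrow> nat \<Rightarrow> nat list \<Rightarrow> nat list \<Rightarrow> real" where
  "posterior q n k y x = ins_prob q n k x y / (\<Sum>x'\<in>words q n. ins_prob q n k x' y)"

definition H_ins :: "nat \<Rightarrow> nat \<Rightarrow> nat \<Rightarrow> nat list \<Rightarrow> real" where
  "H_ins q n k y = (\<Sum>x\<in>words q n. let p = posterior q n k y x in
       if p = 0 then 0 else - p * log 2 p)"

fun rlp :: "'a list \<Rightarrow> nat list" where
  "rlp [] = []"
| "rlp [a] = [1]"
| "rlp (a # b # xs) = (let r = rlp (b # xs) in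
     if a = b then Suc (hd r) # tl r else 1 # r)"

definition rho :: "'a list \<Rightarrow> nat" where
  "rho y = length (rlp y)"

end

theory Submission imports Defs begin

text \<open>A single insertion can be undone only by a single deletion, so the likelihood of x
  given y counts the positions of y whose deletion yields x. Deleting any two positions of
  the same run gives the same word, and positions in different runs give different words;
  hence the nonzero likelihoods form the run length profile of y, each divided by the same
  constant. The posterior is therefore the distribution of the numbers r_i / (n + 1), whose
  entropy depends only on the multiset of run lengths.\<close>

definition del_at :: "nat \<Rightarrow> 'a list \<Rightarrow> 'a list" where
  "del_at i y = take i y @ drop (Suc i) y"

definition del_count :: "'a list \<Rightarrow> 'a list \<Rightarrow> nat" where
  "del_count y x = card {i. i < length y \<and> del_at i y = x}"

definition deletions :: "'a list \<Rightarrow> 'a list set" where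
  "deletions y = (\<lambda>i. del_at i y) ` {..<length y}"

lemma del_at_0_Cons [simp]: "del_at 0 (a # y) = y"
  by (simp add: del_at_def)

lemma del_at_Suc_Cons [simp]: "del_at (Suc i) (a # y) = a # del_at i y"
  by (simp add: del_at_def)

lemma length_del_at: "i < length y \<Longrightarrow> length (del_at i y) = length y - 1"
  by (simp add: del_at_def)

lemma set_del_at_subset: "set (del_at i y) \<subseteq> set y"
  by (auto simp: del_at_def dest: in_set_takeD in_set_dropD)

lemma del_at_map: "del_at i (map f y) = map f (del_at i y)"
  by (simp add: del_at_def take_map drop_map)

lemma del_at_upt:
  "i < m \<Longrightarrow> sorted_list_of_set ({..<m} - {i}) = del_at i [0..<m]"
proof -
  assume "i < m"
  then have "del_at i [0..<m] = [0..<i] @ [Suc i..<m]"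
    by (simp add: del_at_def take_upt drop_upt)
  then have "set (del_at i [0..<m]) = {..<m} - {i}" "sorted (del_at i [0..<m])"
      "distinct (del_at i [0..<m])"
    using \<open>i < m\<close> by (auto simp: sorted_append)
  then show ?thesis
    by (metis sorted_list_of_set.idem_if_sorted_distinct)
qed

lemma card_less_Suc_split:
  "card {i. i < Suc m \<and> P i} = (if P 0 then 1 else 0) + card {i. i < m \<and> P (Suc i)}"
proof -
  have "{i. i < Suc m \<and> P i} = (if P 0 then {0} else {}) \<union> Suc ` {i. i < m \<and> P (Suc i)}"
    by (auto simp: less_Suc_eq_0_disj)
  moreover have "card (Suc ` {i. i < m \<and> P (Suc i)}) = card {i. i < m \<and> P (Suc i)}"
    by (rule card_image) simp
  ultimately show ?thesis
    by (simp add: card_Un_disjoint)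
qed

lemma del_count_Cons:
  "del_count (a # y) x = (if y = x then 1 else 0) + card {i. i < length y \<and> a # del_at i y = x}"
  unfolding del_count_def by (simp add: card_less_Suc_split)

lemma del_count_Cons_Cons:
  "del_count (a # y) (a # x) = (if y = a # x then 1 else 0) + del_count y x"
  by (subst del_count_Cons) (simp add: del_count_def)

lemma del_count_eq_0: "x \<notin> deletions y \<Longrightarrow> del_count y x = 0"
  by (auto simp: del_count_def deletions_def)

lemma deletions_Nil [simp]: "deletions [] = {}"
  by (simp add: deletions_def)

lemma finite_deletions [simp]: "finite (deletions y)"
  by (simp add: deletions_def)

lemma deletions_Cons: "deletions (a # y) = insert y ((#) a ` deletions y)"
  unfolding deletions_def by (auto simp: lessThan_Suc_eq_insert_0 image_image)

lemma tl_in_deletions: "y \<noteq> [] \<Longrightarrow> tl y \<in> deletions y"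
  by (cases y) (auto simp: deletions_Cons)

lemma deletions_subset_words:
  assumes "y \<in> words q (Suc n)"
  shows "deletions y \<subseteq> words q n"
  using assms set_del_at_subset by (fastforce simp: deletions_def words_def length_del_at)

lemma rlp_eq_Nil_iff [simp]: "rlp y = [] \<longleftrightarrow> y = []"
  by (induction y rule: rlp.induct) (auto simp: Let_def)

lemma sum_list_rlp: "sum_list (rlp y) = length y"
proof (induction y rule: rlp.induct)
  case (3 a b y)
  then show ?case
    by (cases "rlp (b # y)") (auto simp: Let_def)
qed simp_all

lemma del_count_tl: "y \<noteq> [] \<Longrightarrow> del_count y (tl y) = hd (rlp y)"
proof (induction y rule: rlp.induct)
  case (2 a)
  then show ?case
    by (simp add: del_count_def del_at_def)
next
  case (3 a b y)
  show ?case
  proof (cases "a = b")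
    case True
    with 3 show ?thesis
      by (simp add: del_count_Cons_Cons Let_def)
  next
    case False
    then show ?thesis
      by (simp add: del_count_Cons Let_def)
  qed
qed simp

lemma image_mset_Cons_mset_set:
  "image_mset f (mset_set ((#) a ` A)) = image_mset (f \<circ> (#) a) (mset_set A)"
  by (simp add: image_mset_mset_set[symmetric] inj_on_def multiset.map_comp)

abbreviation del_counts :: "'a list \<Rightarrow> nat multiset" where
  "del_counts y \<equiv> image_mset (del_count y) (mset_set (deletions y))"

lemma del_counts_new_run:
  assumes "a \<noteq> b"
  shows "del_counts (a # b # y) = add_mset 1 (del_counts (b # y))"
proof -
  have "b # y \<notin> (#) a ` deletions (b # y)"
    using assms by auto
  then have "del_counts (a # b # y)
      = add_mset (del_count (a # b # y) (b # y)) (image_mset (del_count (a # b # y) \<circ> (#) a)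
          (mset_set (deletions (b # y))))"
    by (simp add: deletions_Cons[of a] image_mset_Cons_mset_set)
  moreover have "del_count (a # b # y) (b # y) = 1"
    using assms by (simp add: del_count_Cons)
  moreover have "del_count (a # b # y) \<circ> (#) a = del_count (b # y)"
    using assms by (auto simp: del_count_Cons_Cons)
  ultimately show ?thesis
    by simp
qed

lemma del_counts_same_run:
  "del_counts (a # a # y)
     = add_mset (Suc (del_count (a # y) y)) (image_mset (del_count (a # y)) (mset_set (deletions (a # y) - {y})))"
proof -
  have y_in: "y \<in> deletions (a # y)"
    using tl_in_deletions[of "a # y"] by simp
  then have "deletions (a # a # y) = (#) a ` deletions (a # y)"
    by (auto simp: deletions_Cons[of a "a # y"])
  then have "del_counts (a # a # y)
      = image_mset (\<lambda>x. (if y = x then 1 else 0) + del_count (a # y) x) (mset_set (deletions (a # y)))"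
    by (simp add: image_mset_Cons_mset_set comp_def del_count_Cons_Cons)
  also have "\<dots> = image_mset (\<lambda>x. (if y = x then 1 else 0) + del_count (a # y) x)
      (add_mset y (mset_set (deletions (a # y) - {y})))"
    using y_in by (simp add: mset_set.remove)
  also have "\<dots> = add_mset (Suc (del_count (a # y) y))
      (image_mset (del_count (a # y)) (mset_set (deletions (a # y) - {y})))"
    by (auto intro!: image_mset_cong)
  finally show ?thesis .
qed

lemma del_counts_eq_rlp: "del_counts y = mset (rlp y)"
proof (induction y rule: rlp.induct)
  case (2 a)
  then show ?case
    by (simp add: deletions_Cons del_count_def del_at_def)
next
  case (3 a b y)
  show ?case
  proof (cases "a = b")
    case True
    let ?r = "rlp (b # y)"
    have "mset ?r = add_mset (del_count (b # y) y)
        (image_mset (del_count (b # y)) (mset_set (deletions (b # y) - {y})))"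
      using 3 tl_in_deletions[of "b # y"] by (simp add: mset_set.remove)
    moreover have "mset ?r = add_mset (hd ?r) (mset (tl ?r))" "hd ?r = del_count (b # y) y"
      using del_count_tl[of "b # y"] by (cases ?r; simp)+
    ultimately show ?thesis
      using True by (simp add: del_counts_same_run Let_def)
  next
    case False
    then show ?thesis
      using 3 by (simp add: del_counts_new_run Let_def)
  qed
qed (simp add: deletions_def)

lemma omega_eq_del_count:
  assumes len: "length y = Suc (length x)"
  shows "omega x y = del_count y x"
proof -
  let ?m = "length y"
  let ?D = "{i. i < ?m \<and> del_at i y = x}"
  let ?S = "{I. I \<subseteq> {..<?m} \<and> card I = length x \<and>
               (\<forall>j<length x. y ! (sorted_list_of_set I ! j) = x ! j)}"
  have nth_compl: "y ! (sorted_list_of_set ({..<?m} - {i}) ! j) = del_at i y ! j"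
    if "i < ?m" "j < length x" for i j
  proof -
    have "del_at i y = map ((!) y) (del_at i [0..<?m])"
      by (metis del_at_map map_nth)
    then show ?thesis
      using that len by (simp add: del_at_upt length_del_at)
  qed
  have "?S = (\<lambda>i. {..<?m} - {i}) ` ?D"
  proof (intro equalityI subsetI)
    fix I
    assume "I \<in> ?S"
    then have I: "I \<subseteq> {..<?m}" "card I = length x"
        "\<forall>j<length x. y ! (sorted_list_of_set I ! j) = x ! j"
      by auto
    have "card ({..<?m} - I) = 1"
      using I len by (simp add: card_Diff_subset finite_subset)
    then obtain i where "{..<?m} - I = {i}"
      by (auto simp: card_Suc_eq)
    then have i: "i < ?m" "I = {..<?m} - {i}"
      using I(1) by auto
    have "del_at i y = x"
      using I(3) i len nth_compl by (intro nth_equalityI) (auto simp: length_del_at)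
    with i show "I \<in> (\<lambda>i. {..<?m} - {i}) ` ?D"
      by auto
  qed (use len nth_compl in auto)
  moreover have "inj_on (\<lambda>i. {..<?m} - {i}) ?D"
    by (auto simp: inj_on_def)
  ultimately show ?thesis
    unfolding omega_def del_count_def by (simp add: card_image)
qed

lemma finite_words: "finite (words q n)"
proof -
  have "words q n = {xs. set xs \<subseteq> {..<q} \<and> length xs = n}"
    by (auto simp: words_def)
  then show ?thesis
    by (simp add: finite_lists_length_eq)
qed

lemma sum_words_del_count:
  fixes G :: "nat \<Rightarrow> 'b :: comm_monoid_add"
  assumes "G 0 = 0" and "y \<in> words q (Suc n)"
  shows "(\<Sum>x\<in>words q n. G (del_count y x)) = sum_list (map G (rlp y))"
proof -
  have "(\<Sum>x\<in>words q n. G (del_count y x)) = (\<Sum>x\<in>deletions y. G (del_count y x))"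
    using assms by (intro sum.mono_neutral_right finite_words deletions_subset_words)
      (auto simp: del_count_eq_0)
  also have "\<dots> = sum_mset (image_mset G (del_counts y))"
    by (simp add: sum_unfold_sum_mset multiset.map_comp comp_def)
  also have "\<dots> = sum_list (map G (rlp y))"
    by (metis del_counts_eq_rlp mset_map sum_mset_sum_list)
  finally show ?thesis .
qed

lemma posterior_one_insertion:
  assumes y: "y \<in> words q (Suc n)" and x: "x \<in> words q n"
  shows "posterior q n 1 y x = real (del_count y x) / real (Suc n)"
proof -
  have "length y = Suc n"
    using y by (simp add: words_def)
  then have ins_prob: "ins_prob q n 1 x' y = real (del_count y x') / (real (Suc n) * real q)"
    if "x' \<in> words q n" for x'
    using that by (simp add: ins_prob_def omega_eq_del_count words_def)
  have "q > 0"
    using y by (cases y) (auto simp: words_def)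
  have "(\<Sum>x'\<in>words q n. real (del_count y x')) = real (sum_list (rlp y))"
    using sum_words_del_count[of real y q n] y by (simp add: sum_list_of_nat)
  then have "(\<Sum>x'\<in>words q n. ins_prob q n 1 x' y) = 1 / real q"
    using \<open>length y = Suc n\<close> \<open>q > 0\<close>
    by (simp add: ins_prob sum_divide_distrib[symmetric] sum_list_rlp del: One_nat_def)
  then show ?thesis
    using \<open>q > 0\<close> by (simp add: posterior_def ins_prob[OF x] del: One_nat_def)
qed

lemma entropy_of_counts:
  fixes rs :: "real list"
  assumes N: "sum_list rs = N" "N \<noteq> 0"
  shows "(\<Sum>r\<leftarrow>rs. let p = r / N in if p = 0 then 0 else - p * log b p)
       = log b N - 1 / N * (\<Sum>r\<leftarrow>rs. r * log b r)"
proof -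
  have "(let p = r / N in if p = 0 then 0 else - p * log b p) = r * (log b N / N) - 1 / N * (r * log b r)"
    for r
    using N by (cases "r = 0") (simp_all add: Let_def log_divide field_simps)
  then have "(\<Sum>r\<leftarrow>rs. let p = r / N in if p = 0 then 0 else - p * log b p)
      = (\<Sum>r\<leftarrow>rs. r * (log b N / N) - 1 / N * (r * log b r))"
    by (simp only:)
  also have "\<dots> = sum_list rs * (log b N / N) - 1 / N * (\<Sum>r\<leftarrow>rs. r * log b r)"
    by (simp only: sum_list_subtractf sum_list_const_mult sum_list_mult_const list.map_ident)
  finally show ?thesis
    using N by simp
qed

lemma H_ins_one_insertion:
  assumes "y \<in> words q (n + 1)"
  shows "H_ins q n 1 y
     = log 2 (real (n + 1)) - 1 / real (n + 1) * (\<Sum>r\<in>#mset (rlp y). real r * log 2 (real r))"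
proof -
  have y: "y \<in> words q (Suc n)" and "length y = Suc n"
    using assms by (simp_all add: words_def)
  have "H_ins q n 1 y = (\<Sum>x\<in>words q n. (\<lambda>c. let p = real c / real (Suc n) in
                           if p = 0 then 0 else - p * log 2 p) (del_count y x))"
    unfolding H_ins_def using y
    by (intro sum.cong) (simp_all add: posterior_one_insertion del: One_nat_def)
  also have "\<dots> = (\<Sum>r\<leftarrow>map real (rlp y). let p = r / real (Suc n) in
                     if p = 0 then 0 else - p * log 2 p)"
    using y by (subst sum_words_del_count) (simp_all add: comp_def)
  also have "\<dots> = log 2 (real (Suc n)) - 1 / real (Suc n) * (\<Sum>r\<leftarrow>map real (rlp y). r * log 2 r)"
    using \<open>length y = Suc n\<close>
    by (intro entropy_of_counts) (simp_all add: sum_list_of_nat sum_list_rlp)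
  finally show ?thesis
    by (simp add: sum_mset_sum_list comp_def flip: mset_map)
qed

lemma sum_lessThan_rho_eq_sum_mset: "(\<Sum>i<rho y. f (rlp y ! i)) = (\<Sum>r\<in>#mset (rlp y). f r)"
  by (simp add: sum_mset_sum_list sum_list_sum_nth rho_def atLeast0LessThan flip: mset_map)

theorem theorem2:
  fixes q n :: nat and y :: "nat list"
  assumes "q \<ge> 2" and "n \<ge> 1" and "y \<in> words q (n + 1)"
  shows "(\<forall>y'\<in>words q (n + 1). mset (rlp y') = mset (rlp y) \<longrightarrow> H_ins q n 1 y' = H_ins q n 1 y)
       \<and> H_ins q n 1 y = log 2 (real (n + 1))
            - 1 / real (n + 1) * (\<Sum>i<rho y. real (rlp y ! i) * log 2 (real (rlp y ! i)))"
proof (intro conjI ballI impI)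
  fix y'
  assume "y' \<in> words q (n + 1)" and "mset (rlp y') = mset (rlp y)"
  then show "H_ins q n 1 y' = H_ins q n 1 y"
    by (simp only: H_ins_one_insertion assms(3))
next
  show "H_ins q n 1 y = log 2 (real (n + 1))
            - 1 / real (n + 1) * (\<Sum>i<rho y. real (rlp y ! i) * log 2 (real (rlp y ! i)))"
    by (simp only: H_ins_one_insertion assms(3) sum_lessThan_rho_eq_sum_mset[of "\<lambda>r. real r * log 2 (real r)"])
qed

end
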